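(* Let $Y$ be a non-degenerate metric continuum such that some nonempty open subset of $Y$ contains no arc, and let $p\colon Y\times[0,1]\to Y$ be the projection. Then $p$ cannot be approximated by Krasinkiewicz maps: there exists $\varepsilon>0$ such that no map $q\colon Y\times[0,1]\to Y$ with $\operatorname{dist}(q(z),p(z))<\varepsilon$ for all $z\in Y\times[0,1]$ is a Krasinkiewicz map.
   Context: A continuum is a nonempty compact connected metrizable space; non-degenerate means it has more than one point. An arc is a space homeomorphic to $[0,1]$. For a compact metrizable $X$, a map $g\colon X\to M$ is Krasinkiewicz if every subcontinuum of $X$ is either contained in a fiber of $g$ or contains a component of some fiber of $g$. *)

theory Defs
  imports "HOL-Analysis.Analysis"
begin

definition subcontinuum :: "'a::topological_space set \<Rightarrow> 'a set \<Rightarrow> bool" where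
  "subcontinuum X C \<longleftrightarrow> C \<subseteq> X \<and> C \<noteq> {} \<and> compact C \<and> connected C"

definition fiber :: "'a set \<Rightarrow> ('a \<Rightarrow> 'b) \<Rightarrow> 'b \<Rightarrow> 'a set" where
  "fiber X g y = {x \<in> X. g x = y}"

definition krasinkiewicz_map :: "'a::topological_space set \<Rightarrow> ('a \<Rightarrow> 'b) \<Rightarrow> bool" where
  "krasinkiewicz_map X g \<longleftrightarrow>
     (\<forall>C. subcontinuum X C \<longrightarrow>
        (\<exists>y. C \<subseteq> fiber X g y) \<or> (\<exists>y K. K \<in> components (fiber X g y) \<and> K \<subseteq> C))"

end

theory Submission
  imports Defs
begin

(* Fix a point y0 of the arc-free open set U and a radius
   r > 0 such that the ball of radius 2r about y0 lies in U and some point of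
   Y lies outside cball y0 r.  By the boundary bumping theorem the component C
   of Y \<inter> cball y0 r through y0 is a continuum reaching the sphere of radius
   r.  Let q be r/3-close to the projection.  For y \<in> C the vertical path
   t \<mapsto> q (y, t) stays in U; since every non-constant path in a metric space
   contains an arc, q is constant on each vertical segment {y} \<times> [0,1] over C.
   Then the continuum C \<times> {0} lies in no fibre of q (q separates its points
   y0 and z at distance \<ge> r) and contains no fibre component (such a
   component would contain a whole vertical segment), so q is not Krasinkiewicz. *)

section \<open>Non-constant paths in metric spaces contain arcs\<close>

definition kuratowski_embedding :: "'a::metric_space \<Rightarrow> 'a \<Rightarrow> ('a \<Rightarrow>\<^sub>C real)" where
  "kuratowski_embedding x0 x = Bcontfun (\<lambda>z. dist x z - dist x0 z)"

lemma kuratowski_function_bounded: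
  fixes x x0 :: "'a::metric_space"
  shows "(\<lambda>z. dist x z - dist x0 z) \<in> bcontfun"
proof (rule bcontfun_normI)
  show "continuous_on UNIV (\<lambda>z. dist x z - dist x0 z)"
    by (intro continuous_intros)
  show "norm (dist x z - dist x0 z) \<le> dist x x0" for z
    by (smt (verit) dist_commute dist_triangle real_norm_def)
qed

lemma kuratowski_embedding_isometric:
  fixes x y x0 :: "'a::metric_space"
  shows "dist (kuratowski_embedding x0 x) (kuratowski_embedding x0 y) = dist x y"
proof -
  let ?E = "kuratowski_embedding x0"
  have app: "apply_bcontfun (?E u) = (\<lambda>z. dist u z - dist x0 z)" for u
    by (simp add: kuratowski_embedding_def Bcontfun_inverse kuratowski_function_bounded)
  have "dist (?E x) (?E y) \<le> dist x y"
    by (rule dist_bound) (simp add: app dist_real_def, smt (verit) dist_commute dist_triangle)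
  moreover have "dist (apply_bcontfun (?E x) y) (apply_bcontfun (?E y) y) \<le> dist (?E x) (?E y)"
    by (rule dist_bounded)
  ultimately show ?thesis
    by (simp add: app dist_real_def)
qed

text \<open>The library proves that paths contain arcs only in Banach spaces; an isometric
  embedding transfers this to arbitrary metric spaces.\<close>
lemma path_image_contains_arc:
  fixes g :: "real \<Rightarrow> 'a::metric_space"
  assumes "path g" "g 0 \<noteq> g 1"
  shows "\<exists>A. A \<subseteq> path_image g \<and> A homeomorphic {0..1::real}"
proof -
  define E where "E = kuratowski_embedding (g 0)"
  have iso: "dist (E x) (E y) = dist x y" for x y
    unfolding E_def by (rule kuratowski_embedding_isometric)
  have "continuous_on UNIV E"
    unfolding continuous_on_iff by (metis iso)
  then have path_Eg: "path (E \<circ> g)"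
    using assms(1) unfolding path_def by (metis continuous_on_compose continuous_on_subset subset_UNIV)
  have ends: "E (g 0) \<noteq> E (g 1)"
    using iso assms(2) by (metis dist_eq_0_iff)
  obtain h where h: "arc h" "path_image h \<subseteq> E ` path_image g"
    by (rule path_contains_arc[OF path_Eg _ _ ends])
      (auto simp: pathstart_def pathfinish_def path_image_compose)
  text \<open>Pull the arc back along the isometry.\<close>
  define k where "k t = inv_into (path_image g) E (h t)" for t
  have "h t \<in> E ` path_image g" if "t \<in> {0..1}" for t
    using h(2) that by (auto simp: path_image_def)
  then have Ek: "E (k t) = h t" and kin: "k t \<in> path_image g" if "t \<in> {0..1}" for t
    using that unfolding k_def by (auto intro: f_inv_into_f inv_into_into)
  have dk: "dist (k s) (k t) = dist (h s) (h t)" if "s \<in> {0..1}" "t \<in> {0..1}" for s t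
    using iso Ek that by metis
  have "continuous_on {0..1} k"
    using h(1) unfolding arc_def path_def continuous_on_iff by (metis dk)
  moreover have "inj_on k {0..1}"
    using h(1) Ek unfolding arc_def inj_on_def by metis
  ultimately have "{0..1::real} homeomorphic k ` {0..1}"
    by (intro homeomorphic_compact) auto
  then show ?thesis
    using kin homeomorphic_sym by blast
qed

lemma continuous_into_arc_free_constant:
  fixes f :: "real \<Rightarrow> 'a::metric_space"
  assumes "continuous_on {0..1} f" "f ` {0..1} \<subseteq> U"
    and no_arc: "\<not> (\<exists>A. A \<subseteq> U \<and> A homeomorphic {0..1::real})"
    and "t \<in> {0..1}"
  shows "f t = f 0"
proof (rule ccontr)
  assume ne: "f t \<noteq> f 0"
  define g where "g s = f (s * t)" for s
  have st: "s * t \<in> {0..1}" if "s \<in> {0..1}" for s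
    using that \<open>t \<in> {0..1}\<close> by (auto intro: mult_le_one)
  have "path g"
    unfolding path_def g_def
    by (rule continuous_on_compose2[OF assms(1)]) (use st in \<open>auto intro!: continuous_intros\<close>)
  moreover have "g 0 \<noteq> g 1"
    using ne by (simp add: g_def)
  ultimately obtain A where "A \<subseteq> path_image g" "A homeomorphic {0..1::real}"
    using path_image_contains_arc by blast
  moreover have "path_image g \<subseteq> U"
    using assms(2) st by (auto simp: path_image_def g_def)
  ultimately show False
    using no_arc by blast
qed

section \<open>Continua reaching the boundary of a ball\<close>

lemma continuum_reaches_sphere:
  fixes Y :: "'a::metric_space set"
  assumes "compact Y" "connected Y" "y0 \<in> Y" "b \<in> Y" "0 \<le> r" "r < dist y0 b"
  obtains C z where "compact C" "connected C" "C \<subseteq> Y \<inter> cball y0 r" "y0 \<in> C"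
    "z \<in> C" "dist y0 z \<ge> r"
proof -
  define S where "S = Y \<inter> cball y0 r"
  define X where "X = top_of_set Y"
  define C where "C = connected_component_of_set (subtopology X S) y0"
  have subX: "subtopology X S = top_of_set S"
    by (simp add: X_def S_def subtopology_subtopology Int_absorb1)
  have y0S: "y0 \<in> S"
    using assms(3,5) by (simp add: S_def)
  have "C \<in> connected_components_of (subtopology X S)"
    unfolding C_def using y0S by (simp add: connected_component_in_connected_components_of subX)
  moreover have "b \<notin> S"
    using assms(6) by (simp add: S_def)
  then have "S \<noteq> topspace X"
    using assms(4) by (auto simp: X_def)
  moreover have "connected_space X" "compact_space X" "Hausdorff_space X" "closedin X S"
    using assms(1,2) by (auto simp: X_def S_def connected_space_subtopology
        compact_space_subtopology Hausdorff_space_subtopology closedin_closed_Int)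
  ultimately obtain z where zC: "z \<in> C" and zF: "z \<in> X frontier_of S"
    using boundary_bumping_theorem_closed by blast
  have CS: "C \<subseteq> S"
    using connected_component_of_subset_topspace[of "subtopology X S" y0] subX by (simp add: C_def)
  have "compact S"
    using assms(1) by (simp add: S_def compact_Int_closed)
  then have "compact C"
    using closedin_connected_component_of[of "top_of_set S" y0]
    by (simp add: C_def subX closedin_compact)
  moreover have "connected C"
    using connectedin_connected_component_of[of "subtopology X S" y0]
    by (simp add: C_def subX connectedin_subtopology)
  moreover have "y0 \<in> C"
    using y0S by (simp add: C_def subX connected_component_of_refl)
  moreover have "dist y0 z \<ge> r"
  proof (rule ccontr)
    assume "\<not> r \<le> dist y0 z"
    then have zb: "z \<in> Y \<inter> ball y0 r"
      using zC CS by (auto simp: S_def)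
    have "Y \<inter> ball y0 r \<subseteq> X interior_of S"
      by (rule interior_of_maximal) (auto simp: X_def S_def openin_open_Int)
    then show False
      using zb zF by (auto simp: frontier_of_def)
  qed
  ultimately show ?thesis
    using that zC CS S_def by blast
qed

section \<open>An obstruction to being a Krasinkiewicz map\<close>

lemma vertical_constancy_not_krasinkiewicz:
  fixes Y :: "'a::topological_space set" and q :: "'a \<times> real \<Rightarrow> 'b"
  assumes "C \<subseteq> Y" "compact C" "connected C" "a \<in> C" "b \<in> C"
    and "q (a, 0) \<noteq> q (b, 0)"
    and vertical: "\<And>y t. y \<in> C \<Longrightarrow> t \<in> {0..1} \<Longrightarrow> q (y, t) = q (y, 0)"
  shows "\<not> krasinkiewicz_map (Y \<times> {0..1}) q"
proof
  let ?F = "fiber (Y \<times> {0..1}) q"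
  assume kras: "krasinkiewicz_map (Y \<times> {0..1}) q"
  have "subcontinuum (Y \<times> {0..1}) (C \<times> {0::real})"
    using assms(1-4) by (auto simp: subcontinuum_def compact_Times connected_Times)
  then have "(\<exists>w. C \<times> {0} \<subseteq> ?F w) \<or> (\<exists>w K. K \<in> components (?F w) \<and> K \<subseteq> C \<times> {0})"
    by (rule kras[unfolded krasinkiewicz_map_def, rule_format])
  then consider w where "C \<times> {0} \<subseteq> ?F w"
    | w K where "K \<in> components (?F w)" "K \<subseteq> C \<times> {0}"
    by blast
  then show False
  proof cases
    case 1
    then have "(a, 0) \<in> ?F w" "(b, 0) \<in> ?F w"
      using assms(4,5) by auto
    then show False
      using assms(6) by (simp add: fiber_def)
  next
    case (2 w K)
    obtain x where "x \<in> K"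
      using 2(1) in_components_nonempty by blast
    then obtain y where yK: "(y, 0) \<in> K" and yC: "y \<in> C"
      using 2(2) by auto
    obtain x' where "K = connected_component_set (?F w) x'"
      using 2(1) by (auto simp: components_iff)
    then have K: "K = connected_component_set (?F w) (y, 0)"
      using yK connected_component_eq by metis
    have "(y, 0) \<in> ?F w"
      using 2(1) yK in_components_subset by blast
    then have "q (y, t) = w" if "t \<in> {0..1}" for t
      using vertical[OF yC that] by (simp add: fiber_def)
    then have "{y} \<times> {0..1} \<subseteq> ?F w"
      using yC assms(1) by (auto simp: fiber_def)
    then have "{y} \<times> {0..1} \<subseteq> K"
      unfolding K by (intro connected_component_maximal) (auto simp: connected_Times)
    moreover have "(y, 1) \<in> {y} \<times> {0..1::real}"
      by simp
    ultimately have "(y, 1::real) \<in> C \<times> {0}"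
      using 2(2) by blast
    then show False
      by simp
  qed
qed

lemma close_to_projection_not_krasinkiewicz:
  fixes Y :: "'a::metric_space set" and q :: "'a \<times> real \<Rightarrow> 'a"
  assumes no_arc: "\<not> (\<exists>A. A \<subseteq> Y \<inter> ball y0 (2 * r) \<and> A homeomorphic {0..1::real})"
    and C: "compact C" "connected C" "C \<subseteq> Y \<inter> cball y0 r" "y0 \<in> C"
    and z: "z \<in> C" "dist y0 z \<ge> r"
    and q: "continuous_on (Y \<times> {0..1}) q" "q ` (Y \<times> {0..1}) \<subseteq> Y"
    and close: "\<And>y t. y \<in> Y \<Longrightarrow> t \<in> {0..1} \<Longrightarrow> dist (q (y, t)) y < r/3"
  shows "\<not> krasinkiewicz_map (Y \<times> {0..1}) q"
proof -
  have "y0 \<in> Y"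
    using C(3,4) by auto
  then have "dist (q (y0, 0)) y0 < r/3"
    using close by simp
  then have "r > 0"
    using zero_le_dist[of "q (y0, 0)" y0] by linarith
  text \<open>Over C, each vertical path stays within distance r + r/3 < 2r of y0.\<close>
  have "q (y, t) = q (y, 0)" if "y \<in> C" "t \<in> {0..1}" for y t
  proof (rule continuous_into_arc_free_constant[OF _ _ no_arc \<open>t \<in> {0..1}\<close>])
    show "continuous_on {0..1} (\<lambda>s. q (y, s))"
      using that C(3) by (intro continuous_on_compose2[OF q(1)] continuous_intros) auto
    have "y \<in> Y" "dist y0 y \<le> r"
      using \<open>y \<in> C\<close> C(3) by auto
    then have "dist y0 (q (y, s)) < 2 * r" if "s \<in> {0..1}" for s
      using close[OF \<open>y \<in> Y\<close> that] \<open>r > 0\<close> dist_triangle[of y0 "q (y, s)" y]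
      by (simp add: dist_commute)
    then show "(\<lambda>s. q (y, s)) ` {0..1} \<subseteq> Y \<inter> ball y0 (2 * r)"
      using q(2) \<open>y \<in> Y\<close> by auto
  qed
  moreover have "q (y0, 0) \<noteq> q (z, 0)"
  proof
    assume "q (y0, 0) = q (z, 0)"
    moreover have "z \<in> Y"
      using z(1) C(3) by auto
    ultimately have "dist y0 z < 2 * (r/3)"
      using close[OF \<open>y0 \<in> Y\<close>, of 0] close[of z 0] dist_triangle3[of y0 z "q (z, 0)"]
      by (simp add: dist_commute)
    then show False
      using z(2) \<open>r > 0\<close> by linarith
  qed
  ultimately show ?thesis
    using vertical_constancy_not_krasinkiewicz[OF _ C(1,2,4) z(1)] C(3) by blast
qed

theorem proposition3p7:
  fixes Y :: "'a::metric_space set"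
  assumes "compact Y" and "connected Y"
    and "\<exists>a\<in>Y. \<exists>b\<in>Y. a \<noteq> b"
    and "\<exists>U. openin (top_of_set Y) U \<and> U \<noteq> {} \<and>
              \<not> (\<exists>A. A \<subseteq> U \<and> A homeomorphic {0..1::real})"
  shows "\<exists>\<epsilon>>0. \<forall>q :: 'a \<times> real \<Rightarrow> 'a.
           continuous_on (Y \<times> {0..1}) q \<and> q ` (Y \<times> {0..1}) \<subseteq> Y \<and>
           (\<forall>z\<in>Y \<times> {0..1}. dist (q z) (fst z) < \<epsilon>)
           \<longrightarrow> \<not> krasinkiewicz_map (Y \<times> {0..1}) q"
proof -
  obtain U y0 where U: "openin (top_of_set Y) U" "y0 \<in> U"
    and no_arc: "\<not> (\<exists>A. A \<subseteq> U \<and> A homeomorphic {0..1::real})"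
    using assms(4) by blast
  obtain \<delta> where "\<delta> > 0" and \<delta>: "\<And>y. y \<in> Y \<Longrightarrow> dist y y0 < \<delta> \<Longrightarrow> y \<in> U"
    using U unfolding openin_euclidean_subtopology_iff by blast
  obtain b where "b \<in> Y" "b \<noteq> y0"
    using assms(3) by metis
  define r where "r = min (\<delta>/2) (dist y0 b / 2)"
  have "r > 0" "2 * r \<le> \<delta>" "r < dist y0 b"
    using \<open>\<delta> > 0\<close> \<open>b \<noteq> y0\<close> by (auto simp: r_def min_def)
  then have "Y \<inter> ball y0 (2 * r) \<subseteq> U"
    using \<delta> by (auto simp: dist_commute)
  then have no_arc_ball: "\<not> (\<exists>A. A \<subseteq> Y \<inter> ball y0 (2 * r) \<and> A homeomorphic {0..1::real})"
    using no_arc subset_trans by metis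
  have "y0 \<in> Y"
    using U openin_imp_subset by blast
  then obtain C z where "compact C" "connected C" "C \<subseteq> Y \<inter> cball y0 r" "y0 \<in> C"
    and "z \<in> C" "dist y0 z \<ge> r"
    using continuum_reaches_sphere[OF assms(1,2) _ \<open>b \<in> Y\<close>] \<open>r > 0\<close> \<open>r < dist y0 b\<close>
    by (metis less_imp_le)
  then show ?thesis
    using close_to_projection_not_krasinkiewicz[OF no_arc_ball] \<open>r > 0\<close>
    by (intro exI[of _ "r/3"]) auto
qed

end
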